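(* Let $N\ge1$, $1\le S\le N$, $L$ a band-width vector, $\dot W$ a real symmetric $N\times N$ matrix, $k\in\mathbb Z$, $\beta\in\mathbb R^S$, $\varepsilon>0$, $W_\varepsilon=\mathrm{Id}+\varepsilon\dot W$, $D_\beta=D_{k,\beta,L}$ and $P_{\varepsilon,\beta}=D_\beta W_\varepsilon$. If $f,g\in\mathbb C^N$ and $\lambda\in\mathbb C$ satisfy $P_{\varepsilon,\beta}f=\lambda f$ and $P_{\varepsilon,\beta}g=\lambda g+f$, then $\langle f,D_\beta\overline f\rangle=0$.
   Context: A band-width vector is $L=(L_1,\dots,L_S)$ of positive integers with $\sum_sL_s=N$; $N_0=0$, $N_s=N_{s-1}+L_s$, $B_s=\{j:N_{s-1}<j\le N_s\}$. $D_{k,\beta,L}$ is the $N\times N$ diagonal matrix whose $j$-th diagonal entry is $e^{-2\pi ik\beta_s}$ for $j\in B_s$. $\overline f$ denotes the entrywise complex conjugate and $\langle v,w\rangle=\sum_{j=1}^Nv_j\overline{w_j}$. *)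

theory Defs
  imports "HOL-Analysis.Analysis" "Jordan_Normal_Form.Matrix" "Jordan_Normal_Form.Conjugate"
begin

definition band_width_vector :: "nat \<Rightarrow> nat \<Rightarrow> (nat \<Rightarrow> nat) \<Rightarrow> bool" where
  "band_width_vector N S L \<longleftrightarrow> (\<forall>s\<in>{1..S}. 0 < L s) \<and> (\<Sum>s=1..S. L s) = N"

definition Nsum :: "(nat \<Rightarrow> nat) \<Rightarrow> nat \<Rightarrow> nat" where
  "Nsum L s = (\<Sum>t=1..s. L t)"

definition block :: "(nat \<Rightarrow> nat) \<Rightarrow> nat \<Rightarrow> nat set" where
  "block L s = {j. Nsum L (s - 1) < j \<and> j \<le> Nsum L s}"

definition block_of :: "nat \<Rightarrow> (nat \<Rightarrow> nat) \<Rightarrow> nat \<Rightarrow> nat" where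
  "block_of S L j = (THE s. s \<in> {1..S} \<and> j \<in> block L s)"

text \<open>D_{k,beta,L}: N x N diagonal matrix whose j-th diagonal entry (1-based j) is
  exp(-2 pi i k beta_s) for j in B_s. JNF matrices are 0-based, so row i corresponds to j = i+1.\<close>
definition D_mat :: "nat \<Rightarrow> nat \<Rightarrow> int \<Rightarrow> (nat \<Rightarrow> real) \<Rightarrow> (nat \<Rightarrow> nat) \<Rightarrow> complex mat" where
  "D_mat N S k \<beta> L = mat N N (\<lambda>(i, j). if i = j
      then exp (- 2 * complex_of_real pi * \<i> * of_int k * complex_of_real (\<beta> (block_of S L (i + 1))))
      else 0)"

end

theory Submission
  imports Defs
begin

text \<open>
  The diagonal entries of \<open>D\<^sub>\<beta>\<close> have modulus one, so \<open>E = D\<^sub>\<beta>\<^sup>-\<^sup>1\<close> is the entrywise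
  conjugate of \<open>D\<^sub>\<beta>\<close>, and the hypotheses become \<open>W\<^sub>\<epsilon> f = \<lambda> E f\<close> and
  \<open>W\<^sub>\<epsilon> g = E (\<lambda> g + f)\<close>: \<open>f, g\<close> is a Jordan chain of the pencil \<open>W\<^sub>\<epsilon> - \<lambda> E\<close> of two
  symmetric matrices. For the bilinear (not sesquilinear) form \<open>x \<bullet> y = \<Sum>\<^sub>j x\<^sub>j y\<^sub>j\<close>,
  symmetry of \<open>W\<^sub>\<epsilon>\<close> gives \<open>g \<bullet> W\<^sub>\<epsilon> f = f \<bullet> W\<^sub>\<epsilon> g\<close>, i.e.
  \<open>\<lambda> g \<bullet> E f = \<lambda> f \<bullet> E g + f \<bullet> E f\<close>, and symmetry of \<open>E\<close> leaves \<open>f \<bullet> E f = 0\<close>,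
  which is \<open>\<langle>f, D\<^sub>\<beta> conj f\<rangle>\<close>.
\<close>

lemma scalar_prod_symmetric_mat_vec_swap:
  fixes A :: "'a :: comm_semiring_0 mat"
  assumes "A \<in> carrier_mat n n" and "transpose_mat A = A"
    and "x \<in> carrier_vec n" and "y \<in> carrier_vec n"
  shows "x \<bullet> (A *\<^sub>v y) = y \<bullet> (A *\<^sub>v x)"
proof -
  have "x \<bullet> (A *\<^sub>v y) = (transpose_mat A *\<^sub>v x) \<bullet> y"
    using transpose_vec_mult_scalar[OF assms(1,4,3)] by simp
  also have "\<dots> = y \<bullet> (A *\<^sub>v x)"
    using assms by (simp add: comm_scalar_prod[of _ n])
  finally show ?thesis .
qed

lemma symmetric_pencil_Jordan_chain_isotropic:
  fixes M E :: "'a :: comm_ring mat"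
  assumes M: "M \<in> carrier_mat n n" "transpose_mat M = M"
    and E: "E \<in> carrier_mat n n" "transpose_mat E = E"
    and f: "f \<in> carrier_vec n" and g: "g \<in> carrier_vec n"
    and eigen: "M *\<^sub>v f = E *\<^sub>v (lam \<cdot>\<^sub>v f)"
    and chain: "M *\<^sub>v g = E *\<^sub>v (lam \<cdot>\<^sub>v g + f)"
  shows "f \<bullet> (E *\<^sub>v f) = 0"
proof -
  have swap_E: "x \<bullet> (E *\<^sub>v y) = y \<bullet> (E *\<^sub>v x)" if "x \<in> carrier_vec n" "y \<in> carrier_vec n" for x y
    using scalar_prod_symmetric_mat_vec_swap[OF E that] .
  have "lam * (f \<bullet> (E *\<^sub>v g)) = g \<bullet> (M *\<^sub>v f)"
    using eigen f g E swap_E[of g "lam \<cdot>\<^sub>v f"] by simp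
  also have "\<dots> = f \<bullet> (M *\<^sub>v g)"
    using scalar_prod_symmetric_mat_vec_swap[OF M g f] .
  also have "\<dots> = lam * (g \<bullet> (E *\<^sub>v f)) + f \<bullet> (E *\<^sub>v f)"
    using chain f g E swap_E[of f "lam \<cdot>\<^sub>v g"]
    by (simp add: mult_add_distrib_mat_vec scalar_prod_add_distrib)
  finally show ?thesis
    using swap_E[OF f g] by simp
qed

lemma mult_mat_vec_left_inverse:
  fixes E D M :: "'a :: semiring_1 mat"
  assumes "E \<in> carrier_mat n n" "D \<in> carrier_mat n n" "M \<in> carrier_mat n n"
    and "x \<in> carrier_vec n" and "E * D = 1\<^sub>m n"
    and "(D * M) *\<^sub>v x = y"
  shows "M *\<^sub>v x = E *\<^sub>v y"
proof -
  have "E *\<^sub>v y = E *\<^sub>v (D *\<^sub>v (M *\<^sub>v x))"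
    using assms by simp
  also have "\<dots> = (E * D) *\<^sub>v (M *\<^sub>v x)"
    using assms by (intro assoc_mult_mat_vec[symmetric]) auto
  finally show ?thesis
    using assms by simp
qed

lemma transpose_one_add_smult_mat:
  fixes W :: "'a :: semiring_1 mat"
  assumes "W \<in> carrier_mat n n" and "transpose_mat W = W"
  shows "transpose_mat (1\<^sub>m n + c \<cdot>\<^sub>m W) = 1\<^sub>m n + c \<cdot>\<^sub>m W"
proof -
  have "transpose_mat (c \<cdot>\<^sub>m W) = c \<cdot>\<^sub>m transpose_mat W"
    by (rule eq_matI) auto
  with assms show ?thesis
    by (simp add: transpose_add[of _ n n])
qed

lemma mat_diag_mult_vec:
  assumes "x \<in> carrier_vec n"
  shows "mat_diag n d *\<^sub>v x = vec n (\<lambda>i. d i * x $ i)"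
proof (rule eq_vecI)
  fix i assume "i < dim_vec (vec n (\<lambda>i. d i * x $ i))"
  then have "i < n" by simp
  then have "(mat_diag n d *\<^sub>v x) $ i = (\<Sum>j\<in>{0..<n}. (if i = j then d j else 0) * x $ j)"
    using assms by (simp add: mat_diag_def scalar_prod_def)
  also have "\<dots> = (\<Sum>j\<in>{0..<n}. if i = j then d j * x $ j else 0)"
    by (rule sum.cong) auto
  finally show "(mat_diag n d *\<^sub>v x) $ i = vec n (\<lambda>i. d i * x $ i) $ i"
    using \<open>i < n\<close> by simp
qed (simp add: mat_diag_def)

lemma transpose_mat_diag [simp]: "transpose_mat (mat_diag n d) = mat_diag n d"
  by (auto simp: mat_diag_def)

lemma cscalar_prod_mat_diag_conjugate:
  fixes f :: "complex vec"
  assumes "f \<in> carrier_vec n"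
  shows "f \<bullet>c (mat_diag n d *\<^sub>v conjugate f) = f \<bullet> (mat_diag n (\<lambda>i. cnj (d i)) *\<^sub>v f)"
  using assms by (simp add: mat_diag_mult_vec scalar_prod_def)

lemma cnj_mult_exp_imaginary:
  assumes "Re z = 0"
  shows "cnj (exp z) * exp z = 1"
proof -
  have "cnj z = - z"
    using assms by (simp add: complex_eq_iff)
  then show ?thesis
    by (simp add: exp_cnj exp_minus)
qed

lemma D_mat_unimodular_diagonal:
  "\<exists>d. D_mat N S k \<beta> L = mat_diag N d \<and> (\<forall>i. cnj (d i) * d i = 1)"
proof (intro exI conjI allI)
  let ?d = "\<lambda>i. exp (- 2 * complex_of_real pi * \<i> * of_int k * complex_of_real (\<beta> (block_of S L (i + 1))))"
  show "D_mat N S k \<beta> L = mat_diag N ?d"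
    by (auto simp: D_mat_def mat_diag_def)
  show "cnj (?d i) * ?d i = 1" for i
    by (rule cnj_mult_exp_imaginary) simp
qed

theorem lemma3p5:
  fixes N S :: nat and L :: "nat \<Rightarrow> nat" and Wdot :: "real mat" and k :: int
    and \<beta> :: "nat \<Rightarrow> real" and \<epsilon> :: real and f g :: "complex vec" and lam :: complex
  assumes "N \<ge> 1" and "1 \<le> S" and "S \<le> N"
    and "band_width_vector N S L"
    and "Wdot \<in> carrier_mat N N" and "transpose_mat Wdot = Wdot"
    and "\<epsilon> > 0"
    and "f \<in> carrier_vec N" and "g \<in> carrier_vec N"
    and "(D_mat N S k \<beta> L * map_mat complex_of_real (1\<^sub>m N + \<epsilon> \<cdot>\<^sub>m Wdot)) *\<^sub>v f = lam \<cdot>\<^sub>v f"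
    and "(D_mat N S k \<beta> L * map_mat complex_of_real (1\<^sub>m N + \<epsilon> \<cdot>\<^sub>m Wdot)) *\<^sub>v g = lam \<cdot>\<^sub>v g + f"
  shows "f \<bullet>c (D_mat N S k \<beta> L *\<^sub>v conjugate f) = 0"
proof -
  obtain d where D: "D_mat N S k \<beta> L = mat_diag N d" and unimodular: "\<And>i. cnj (d i) * d i = 1"
    using D_mat_unimodular_diagonal by blast
  define E where "E = mat_diag N (\<lambda>i. cnj (d i))"
  define M where "M = map_mat complex_of_real (1\<^sub>m N + \<epsilon> \<cdot>\<^sub>m Wdot)"
  have M: "M \<in> carrier_mat N N" "transpose_mat M = M"
    using assms(5) transpose_one_add_smult_mat[OF assms(5,6)] by (auto simp: M_def map_mat_transpose)
  have E: "E \<in> carrier_mat N N" "transpose_mat E = E" and ED: "E * mat_diag N d = 1\<^sub>m N"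
    by (simp_all add: E_def unimodular)
  have "M *\<^sub>v f = E *\<^sub>v (lam \<cdot>\<^sub>v f)" and "M *\<^sub>v g = E *\<^sub>v (lam \<cdot>\<^sub>v g + f)"
    using mult_mat_vec_left_inverse[OF E(1) _ M(1) _ ED] assms(8-11) E(1)
    by (auto simp: D M_def)
  then have "f \<bullet> (E *\<^sub>v f) = 0"
    using symmetric_pencil_Jordan_chain_isotropic[OF M E assms(8,9)] by blast
  then show ?thesis
    using cscalar_prod_mat_diag_conjugate[OF assms(8)] by (simp add: D E_def)
qed

end
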